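(* Let $\varphi=(1+\sqrt5)/2$ and let $s_Z$ be the Zeckendorf sum of digits function. Let $I_Z=(I_Z(n))_{n\ge1}$ be the increasing enumeration of the points of increase of $s_Z$, let $C_Z=(C_Z(n))_{n\ge1}$ be the increasing enumeration of the points of constancy of $s_Z$, and let $D_Z=(D_Z(n))_{n\ge1}$ be defined by $D_Z(1)=-1$ and, for $n\ge1$, $D_Z(n+1)$ is the $n$-th smallest point of decrease of $s_Z$. Then: (i) $I_Z(n)=\lfloor n\varphi\rfloor+n-2$ for all $n\ge1$; (ii) the set of points of constancy of $s_Z$ equals $\{2\lfloor n\varphi\rfloor+n-2:\ n\ge1\}\cup\{3\lfloor n\varphi\rfloor+2n-3:\ n\ge1\}$, i.e. $C_Z$ is the increasing enumeration of this union; (iii) $D_Z(n)=2\lfloor n\varphi\rfloor+n-4$ for all $n\ge1$.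
   Context: Fibonacci numbers: $F_0=0$, $F_1=1$, $F_n=F_{n-1}+F_{n-2}$ for $n\ge2$. Every integer $N\ge0$ can be written uniquely (ignoring leading zeros) as $N=\sum_{i\ge0}d_i(N)F_{i+2}$ with digits $d_i(N)\in\{0,1\}$ such that no two consecutive digits $d_i,d_{i+1}$ are both $1$ (Zeckendorf expansion). The Zeckendorf sum of digits function is $s_Z(N)=\sum_{i\ge0}d_i(N)$ for $N\ge0$. With $\Delta s_Z(N)=s_Z(N+1)-s_Z(N)$, an integer $N\ge0$ is a point of increase, of constancy, or of decrease of $s_Z$ according as $\Delta s_Z(N)>0$, $=0$, or $<0$. *)

theory Defs
  imports Complex_Main "HOL-Number_Theory.Fib" "HOL-Library.Infinite_Set"
begin

definition phi :: real where "phi = (1 + sqrt 5) / 2"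

definition zeck_rep :: "nat \<Rightarrow> nat set \<Rightarrow> bool" where
  "zeck_rep N S \<longleftrightarrow> finite S \<and> (\<forall>i\<in>S. Suc i \<notin> S) \<and> N = (\<Sum>i\<in>S. fib (i + 2))"

definition sZ :: "nat \<Rightarrow> nat" where
  "sZ N = card (THE S. zeck_rep N S)"

definition incr_pts :: "nat set" where
  "incr_pts = {N. int (sZ (Suc N)) - int (sZ N) > 0}"

definition const_pts :: "nat set" where
  "const_pts = {N. int (sZ (Suc N)) - int (sZ N) = 0}"

definition decr_pts :: "nat set" where
  "decr_pts = {N. int (sZ (Suc N)) - int (sZ N) < 0}"

definition I_Z :: "nat \<Rightarrow> nat" where
  "I_Z n = enumerate incr_pts (n - 1)"

definition C_Z :: "nat \<Rightarrow> nat" where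
  "C_Z n = enumerate const_pts (n - 1)"

definition D_Z :: "nat \<Rightarrow> int" where
  "D_Z n = (if n = 1 then -1 else int (enumerate decr_pts (n - 2)))"

end

theory Submission
  imports Defs
begin

(* Let tau = phi - 1 = 1/phi. Since F(i+2) tau = F(i+1) - (-tau)^(i+2), the phase
   frac((N + 2) tau) equals 2 tau minus the sum of (-tau)^(i+2) over the Zeckendorf digits i of N,
   taken mod 1, and the digits beyond the first few contribute an exponentially small amount.
   The sign of sZ(N+1) - sZ(N) is decided by the lowest digits as well: if d_0 = d_1 = 0 a digit
   is added; otherwise the lowest digit j in {0,1} is carried to j + 1, and a digit is lost exactly
   when d_(j+2) = 1. Hence the points of increase, constancy and decrease are the N whose phase lies
   in fixed unions of intervals. By Cassini's identity, M = F(k+1) floor(n phi) + F(k) n for some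
   n >= 1 iff M tau lies within (-tau)^(k+1) [0,1) of an integer, which turns these intervals into
   the sets of the statement. *)

section \<open>Zeckendorf representations\<close>

definition zeck_set :: "nat set \<Rightarrow> bool" where
  "zeck_set S \<longleftrightarrow> finite S \<and> (\<forall>i\<in>S. Suc i \<notin> S)"

definition zeck_val :: "nat set \<Rightarrow> nat" where
  "zeck_val S = (\<Sum>i\<in>S. fib (i + 2))"

lemma zeck_rep_iff: "zeck_rep N S \<longleftrightarrow> zeck_set S \<and> N = zeck_val S"
  unfolding zeck_rep_def zeck_set_def zeck_val_def by auto

lemma zeck_set_Diff: "zeck_set S \<Longrightarrow> zeck_set (S - A)"
  unfolding zeck_set_def by auto

lemma zeck_val_remove: "zeck_set S \<Longrightarrow> i \<in> S \<Longrightarrow> zeck_val S = fib (i + 2) + zeck_val (S - {i})"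
  unfolding zeck_set_def zeck_val_def by (simp add: sum.remove)

lemma zeck_val_empty [simp]: "zeck_val {} = 0"
  by (simp add: zeck_val_def)

lemma zeck_val_less_fib: "zeck_set S \<Longrightarrow> S \<subseteq> {..<m} \<Longrightarrow> zeck_val S < fib (m + 2)"
proof (induction m arbitrary: S rule: fib.induct)
  case 1
  then show ?case by simp
next
  case 2
  then have "S = {} \<or> S = {0}" by auto
  then show ?case by (auto simp: zeck_val_def numeral_eq_Suc)
next
  case (3 m)
  show ?case
  proof (cases "Suc m \<in> S")
    case True
    then have "m \<notin> S" using "3.prems"(1) by (auto simp: zeck_set_def)
    then have "S - {Suc m} \<subseteq> {..<m}" using "3.prems"(2) by (auto simp: less_Suc_eq)
    then have "zeck_val (S - {Suc m}) < fib (m + 2)"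
      by (rule "3.IH"(2)[OF zeck_set_Diff[OF "3.prems"(1)]])
    then show ?thesis
      using zeck_val_remove[OF "3.prems"(1) True] by (simp add: numeral_eq_Suc)
  next
    case False
    then have "S \<subseteq> {..<Suc m}" using "3.prems"(2) by (auto simp: less_Suc_eq)
    then have "zeck_val S < fib (Suc m + 2)" by (rule "3.IH"(1)[OF "3.prems"(1)])
    also have "\<dots> \<le> fib (Suc (Suc m) + 2)" by (rule fib_mono) simp
    finally show ?thesis .
  qed
qed

lemma zeck_val_inj_bounded:
  "zeck_set S \<Longrightarrow> zeck_set T \<Longrightarrow> S \<union> T \<subseteq> {..<m} \<Longrightarrow> zeck_val S = zeck_val T \<Longrightarrow> S = T"
proof (induction m arbitrary: S T)
  case 0
  then show ?case by simp
next
  case (Suc m)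
  have top_digit_shared: "m \<in> T" if "zeck_set S" "zeck_set T" "S \<union> T \<subseteq> {..<Suc m}"
    "zeck_val S = zeck_val T" "m \<in> S" for S T
  proof (rule ccontr)
    assume "m \<notin> T"
    then have "T \<subseteq> {..<m}" using that(3) by (auto simp: less_Suc_eq)
    then have "zeck_val T < fib (m + 2)" using zeck_val_less_fib that(2) by blast
    moreover have "fib (m + 2) \<le> zeck_val S" using zeck_val_remove[OF that(1,5)] by simp
    ultimately show False using that(4) by simp
  qed
  show ?case
  proof (cases "m \<in> S \<or> m \<in> T")
    case True
    then have "m \<in> S" "m \<in> T" using top_digit_shared Suc.prems by (metis Un_commute)+
    then have "zeck_val (S - {m}) = zeck_val (T - {m})"
      using Suc.prems zeck_val_remove by (metis add_left_cancel)
    moreover have "S - {m} \<union> (T - {m}) \<subseteq> {..<m}" using Suc.prems(3) by (auto simp: less_Suc_eq)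
    ultimately have "S - {m} = T - {m}"
      using Suc.IH[OF zeck_set_Diff[OF Suc.prems(1)] zeck_set_Diff[OF Suc.prems(2)]] by blast
    then show ?thesis using \<open>m \<in> S\<close> \<open>m \<in> T\<close> by blast
  next
    case False
    then have "S \<union> T \<subseteq> {..<m}" using Suc.prems(3) by (auto simp: less_Suc_eq)
    then show ?thesis using Suc.IH[OF Suc.prems(1,2)] Suc.prems(4) by blast
  qed
qed

lemma zeck_val_inj: "zeck_set S \<Longrightarrow> zeck_set T \<Longrightarrow> zeck_val S = zeck_val T \<Longrightarrow> S = T"
proof -
  assume "zeck_set S" "zeck_set T" "zeck_val S = zeck_val T"
  moreover have "finite (S \<union> T)" using \<open>zeck_set S\<close> \<open>zeck_set T\<close> by (simp add: zeck_set_def)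
  then obtain m where "S \<union> T \<subseteq> {..<m}" by (meson finite_nat_iff_bounded)
  ultimately show "S = T" using zeck_val_inj_bounded by blast
qed

(* Adding F(j+1) to a representation with digit j moves that digit to j + 1; if this creates
   two adjacent digits, the carry propagates and one digit is lost. *)
lemma zeck_carry:
  assumes "zeck_set S" "j \<in> S"
  shows "\<exists>S'. zeck_set S' \<and> zeck_val S' = zeck_val S + fib (j + 1)
    \<and> (if j + 2 \<in> S then card S' < card S else card S' = card S)"
  using assms
proof (induction "card S" arbitrary: S j rule: less_induct)
  case less
  have fin: "finite S" and "j + 1 \<notin> S" using less.prems by (auto simp: zeck_set_def)
  have val_S: "zeck_val S = fib (j + 2) + zeck_val (S - {j})"
    by (rule zeck_val_remove[OF less.prems])
  show ?case
  proof (cases "j + 2 \<in> S")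
    case False
    define S' where "S' = insert (j + 1) (S - {j})"
    have "zeck_set S'" using less.prems False unfolding S'_def zeck_set_def by auto
    moreover have "zeck_val S' = fib (j + 3) + zeck_val (S - {j})"
      using fin \<open>j + 1 \<notin> S\<close> by (simp add: S'_def zeck_val_def numeral_eq_Suc)
    moreover have "card S' = Suc (card (S - {j}))"
      unfolding S'_def using fin \<open>j + 1 \<notin> S\<close> by (subst card_insert_disjoint) auto
    then have "card S' = card S" using card_Suc_Diff1[OF fin less.prems(2)] by simp
    ultimately show ?thesis using False val_S by (intro exI[of _ S']) (simp add: numeral_eq_Suc)
  next
    case True
    have smaller: "card (S - {j}) < card S" using fin less.prems(2) by (rule card_Diff1_less)
    obtain S' where S': "zeck_set S'" "zeck_val S' = zeck_val (S - {j}) + fib (j + 2 + 1)"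
      "card S' \<le> card (S - {j})"
      using less.hyps[OF smaller zeck_set_Diff[OF less.prems(1)], of "j + 2"] True
      by (auto split: if_splits)
    have "zeck_val S' = zeck_val S + fib (j + 1)"
      using S'(2) val_S by (simp add: numeral_eq_Suc)
    then show ?thesis using S'(1,3) smaller True by (intro exI[of _ S']) simp
  qed
qed

lemma zeck_set_insert_0: "zeck_set S \<Longrightarrow> 0 \<notin> S \<Longrightarrow> 1 \<notin> S \<Longrightarrow>
    zeck_set (insert 0 S) \<and> zeck_val (insert 0 S) = Suc (zeck_val S)"
  unfolding zeck_set_def zeck_val_def by auto

lemma zeck_val_surj: "\<exists>S. zeck_set S \<and> zeck_val S = N"
proof (induction N)
  case 0
  show ?case by (intro exI[of _ "{}"]) (simp add: zeck_set_def)
next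
  case (Suc N)
  then obtain S where S: "zeck_set S" "zeck_val S = N" by blast
  show ?case
  proof (cases "\<exists>j\<le>1. j \<in> S")
    case True
    then obtain j where "j \<le> 1" "j \<in> S" by blast
    moreover have "fib (j + 1) = 1" using \<open>j \<le> 1\<close> by (cases j) auto
    ultimately show ?thesis using zeck_carry[OF S(1)] S(2) by fastforce
  next
    case False
    then show ?thesis using zeck_set_insert_0[OF S(1)] S(2) by auto
  qed
qed

lemma sZ_zeck_val: "zeck_set S \<Longrightarrow> sZ (zeck_val S) = card S"
  unfolding sZ_def zeck_rep_iff
  by (rule arg_cong[of _ _ card], rule the_equality) (use zeck_val_inj in auto)

lemma incr_ptsI: "zeck_set S \<Longrightarrow> 0 \<notin> S \<Longrightarrow> 1 \<notin> S \<Longrightarrow> zeck_val S \<in> incr_pts"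
  using zeck_set_insert_0[of S] sZ_zeck_val[of S] sZ_zeck_val[of "insert 0 S"]
  by (simp add: incr_pts_def zeck_set_def)

lemma const_ptsI:
  assumes "zeck_set S" "j \<le> 1" "j \<in> S" "j + 2 \<notin> S"
  shows "zeck_val S \<in> const_pts"
proof -
  obtain S' where "zeck_set S'" "zeck_val S' = Suc (zeck_val S)" "card S' = card S"
    using zeck_carry[OF assms(1,3)] assms(2,4) by (cases j) auto
  then show ?thesis using sZ_zeck_val[OF assms(1)] sZ_zeck_val[of S'] by (simp add: const_pts_def)
qed

lemma decr_ptsI:
  assumes "zeck_set S" "j \<le> 1" "j \<in> S" "j + 2 \<in> S"
  shows "zeck_val S \<in> decr_pts"
proof -
  obtain S' where "zeck_set S'" "zeck_val S' = Suc (zeck_val S)" "card S' < card S"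
    using zeck_carry[OF assms(1,3)] assms(2,4) by (cases j) auto
  then show ?thesis using sZ_zeck_val[OF assms(1)] sZ_zeck_val[of S'] by (simp add: decr_pts_def)
qed

section \<open>The inverse of the golden ratio\<close>

definition tau :: real where
  "tau = phi - 1"

lemma tau_sq: "tau\<^sup>2 = 1 - tau"
proof -
  have "2 * tau + 1 = sqrt 5" unfolding tau_def phi_def by (simp add: field_simps)
  then have "(2 * tau + 1)\<^sup>2 = 5" by simp
  then show ?thesis by (simp add: power2_eq_square algebra_simps)
qed

lemma tau_bounds: "3/5 < tau" "tau < 5/8"
proof -
  have "2.2 < sqrt 5" by (rule real_less_rsqrt) (simp add: power2_eq_square)
  moreover have "sqrt 5 < 2.25" by (rule real_less_lsqrt) (simp_all add: power2_eq_square)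
  ultimately show "3/5 < tau" "tau < 5/8" unfolding tau_def phi_def by auto
qed

lemma tau_pos: "0 < tau"
  using tau_bounds by simp

lemma tau_pow_rec: "tau ^ (k + 2) = tau ^ k - tau ^ (k + 1)"
proof -
  have "tau ^ (k + 2) = tau ^ k * tau\<^sup>2" by (rule power_add)
  then show ?thesis using tau_sq by (simp add: algebra_simps)
qed

lemma tau_pow_eqs:
  "tau ^ 3 = 2 * tau - 1" "tau ^ 4 = 2 - 3 * tau" "tau ^ 5 = 5 * tau - 3"
  "tau ^ 6 = 5 - 8 * tau" "tau ^ 7 = 13 * tau - 8"
proof -
  have "tau ^ 3 = tau - tau\<^sup>2" using tau_pow_rec[of 1] by (simp add: power2_eq_square power3_eq_cube)
  moreover have "tau ^ 4 = tau\<^sup>2 - tau ^ 3" "tau ^ 5 = tau ^ 3 - tau ^ 4"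
    "tau ^ 6 = tau ^ 4 - tau ^ 5" "tau ^ 7 = tau ^ 5 - tau ^ 6"
    using tau_pow_rec[of 2] tau_pow_rec[of 3] tau_pow_rec[of 4] tau_pow_rec[of 5] by simp_all
  ultimately show "tau ^ 3 = 2 * tau - 1" "tau ^ 4 = 2 - 3 * tau" "tau ^ 5 = 5 * tau - 3"
    "tau ^ 6 = 5 - 8 * tau" "tau ^ 7 = 13 * tau - 8"
    using tau_sq by linarith+
qed

lemma tau_pow_Suc_bounds: "0 < tau ^ Suc k" "tau ^ Suc k \<le> 1"
  using tau_pos tau_bounds by (simp, intro power_le_one) auto

lemma floor_mult_phi: "\<lfloor>real n * phi\<rfloor> = int n + \<lfloor>real n * tau\<rfloor>"
proof -
  have "real n * phi = real n * tau + of_int (int n)" unfolding tau_def by (simp add: algebra_simps)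
  then show ?thesis by simp
qed

lemma floor_mult_phi_ge: "int n \<le> \<lfloor>real n * phi\<rfloor>"
  unfolding floor_mult_phi using tau_pos by simp

lemma tau_window_skip:
  "-(tau ^ (j + 3)) < - x \<Longrightarrow> - x < tau ^ (j + 2) \<Longrightarrow> -(tau ^ (j + 2)) < x \<and> x < tau ^ (j + 1)"
  using tau_pow_rec[of "j + 1"] tau_pos by (simp add: numeral_eq_Suc del: power_Suc) (smt (verit) zero_less_power)

lemma tau_window_add:
  "-(tau ^ (j + 4)) < x \<Longrightarrow> x < tau ^ (j + 3)
    \<Longrightarrow> -(tau ^ (j + 2)) < tau ^ (j + 2) + x \<and> tau ^ (j + 2) + x < tau ^ (j + 1)"
  using tau_pow_rec[of "j + 1"] tau_pow_rec[of "j + 2"] tau_pos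
  by (simp add: numeral_eq_Suc del: power_Suc) (smt (verit) zero_less_power)

lemma fib_mult_tau: "real (fib (Suc j)) * tau = real (fib j) - (-tau) ^ Suc j"
proof (induction j rule: fib.induct)
  case 1
  then show ?case by simp
next
  case 2
  then show ?case using tau_sq by (simp add: power2_eq_square)
next
  case (3 j)
  have "real (fib (Suc (Suc (Suc j)))) * tau = real (fib (Suc (Suc j))) * tau + real (fib (Suc j)) * tau"
    by (simp add: algebra_simps)
  also have "\<dots> = real (fib (Suc (Suc j))) - (-tau) ^ Suc j * (1 - tau)"
    using "3.IH" by (simp add: algebra_simps)
  also have "(-tau) ^ Suc j * (1 - tau) = (-tau) ^ Suc (Suc (Suc j))"
    using tau_sq by (simp add: power2_eq_square)
  finally show ?case .
qed

lemma int_sq_add_mult_neq_sq: "0 < m \<Longrightarrow> q\<^sup>2 + q * int m \<noteq> (int m)\<^sup>2"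
proof (induction m arbitrary: q rule: less_induct)
  case (less m)
  show ?case
  proof
    assume eq: "q\<^sup>2 + q * int m = (int m)\<^sup>2"
    show False
    proof (cases "even m")
      case False
      have "q\<^sup>2 + q * int m = q * (q + int m)" by (simp add: power2_eq_square algebra_simps)
      then have "even (q\<^sup>2 + q * int m)" using False by (cases "even q") auto
      then show False using eq False by simp
    next
      case True
      then obtain k where k: "m = 2 * k" by blast
      then have "q\<^sup>2 = 2 * (2 * (int k)\<^sup>2 - q * int k)" using eq by (simp add: algebra_simps power2_eq_square)
      then obtain p where p: "q = 2 * p" by (metis even_mult_iff dvd_triv_left evenE power2_eq_square)
      then have "p\<^sup>2 + p * int k = (int k)\<^sup>2" using eq k by (simp add: algebra_simps power2_eq_square)
      moreover have "k < m" "0 < k" using k less.prems by auto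
      ultimately show False using less.IH by blast
    qed
  qed
qed

lemma mult_tau_notin_Ints: "0 < M \<Longrightarrow> of_int M * tau \<notin> \<int>"
proof
  assume "0 < M" "of_int M * tau \<in> \<int>"
  then obtain q where q: "of_int M * tau = of_int q" by (auto elim: Ints_cases)
  have "(of_int M * tau)\<^sup>2 + (of_int M * tau) * of_int M = (of_int M)\<^sup>2 * (tau\<^sup>2 + tau)"
    by (simp add: power2_eq_square algebra_simps)
  also have "\<dots> = (of_int M)\<^sup>2" using tau_sq by simp
  finally have "(of_int M * tau)\<^sup>2 + (of_int M * tau) * of_int M = (of_int M)\<^sup>2" .
  then have "real_of_int (q\<^sup>2 + q * M) = of_int (M\<^sup>2)" unfolding q by simp
  then have "q\<^sup>2 + q * int (nat M) = (int (nat M))\<^sup>2" using \<open>0 < M\<close> by (simp only: of_int_eq_iff) simp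
  then show False using int_sq_add_mult_neq_sq[of "nat M" q] \<open>0 < M\<close> by simp
qed

section \<open>The phase of a Zeckendorf expansion\<close>

lemma frac_eq_diff: "(k::real) \<in> \<int> \<Longrightarrow> k \<le> x \<Longrightarrow> x < k + 1 \<Longrightarrow> frac x = x - k"
  by (simp add: frac_unique_iff)

definition zeck_error :: "nat set \<Rightarrow> real" where
  "zeck_error S = (\<Sum>i\<in>S. (-tau) ^ (i + 2))"

lemma zeck_val_mult_tau: "real (zeck_val S) * tau = real (\<Sum>i\<in>S. fib (Suc i)) - zeck_error S"
proof -
  have "real (zeck_val S) * tau = (\<Sum>i\<in>S. real (fib (Suc (Suc i))) * tau)"
    unfolding zeck_val_def by (simp add: sum_distrib_right)
  also have "\<dots> = (\<Sum>i\<in>S. real (fib (Suc i)) - (-tau) ^ (i + 2))"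
    by (intro sum.cong refl) (simp only: fib_mult_tau add_2_eq_Suc')
  finally show ?thesis by (simp add: zeck_error_def sum_subtractf)
qed

lemma zeck_error_bound:
  assumes "zeck_set T" "T \<subseteq> {j..}"
  shows "-(tau ^ (j + 2)) < (-1) ^ j * zeck_error T \<and> (-1) ^ j * zeck_error T < tau ^ (j + 1)"
proof -
  obtain d where "T \<subseteq> {..<j + d}"
    using assms(1) unfolding zeck_set_def by (metis finite_nat_iff_bounded le_add2 order.trans lessThan_subset_iff)
  then show ?thesis using assms
  proof (induction d arbitrary: T j rule: less_induct)
    case (less d)
    show ?case
    proof (cases "j \<in> T")
      case False
      show ?thesis
      proof (cases "T = {}")
        case True
        then show ?thesis using tau_pos by (simp add: zeck_error_def)
      next
        case False
        then obtain i where "i \<in> T" by blast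
        then have "0 < d" using less.prems(1,3) by fastforce
        have "T \<subseteq> {Suc j..}" "T \<subseteq> {..<Suc j + (d - 1)}"
          using less.prems(1,3) \<open>j \<notin> T\<close> \<open>0 < d\<close> by (auto simp: subset_eq Suc_le_eq dest: le_neq_implies_less)
        then have "-(tau ^ (Suc j + 2)) < (-1) ^ Suc j * zeck_error T
            \<and> (-1) ^ Suc j * zeck_error T < tau ^ (Suc j + 1)"
          using less.IH[of "d - 1" T "Suc j"] \<open>0 < d\<close> less.prems(2) by simp
        then show ?thesis using tau_window_skip[of j "(-1) ^ j * zeck_error T"] by (simp add: numeral_eq_Suc)
      qed
    next
      case True
      then have "Suc j \<notin> T" using less.prems(2) by (auto simp: zeck_set_def)
      have "j + 2 \<le> i \<and> i < j + 2 + (d - 2)" if "i \<in> T - {j}" for i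
      proof -
        have "j \<le> i" "i \<noteq> j" "i \<noteq> Suc j" "i < j + d"
          using that less.prems(1,3) \<open>Suc j \<notin> T\<close> by auto
        then show ?thesis by simp
      qed
      then have "T - {j} \<subseteq> {j + 2..}" "T - {j} \<subseteq> {..<j + 2 + (d - 2)}" by auto
      then have "-(tau ^ (j + 2 + 2)) < (-1) ^ (j + 2) * zeck_error (T - {j})
          \<and> (-1) ^ (j + 2) * zeck_error (T - {j}) < tau ^ (j + 2 + 1)"
        using less.IH[of "d - 2" "T - {j}" "j + 2"] True less.prems zeck_set_Diff by fastforce
      moreover have "(-1) ^ j * zeck_error T = tau ^ (j + 2) + (-1) ^ (j + 2) * zeck_error (T - {j})"
        using True less.prems(2) by (simp add: zeck_error_def zeck_set_def sum.remove algebra_simps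
            power_minus[of tau] flip: power_add)
      ultimately show ?thesis
        using tau_window_add[of j "(-1) ^ (j + 2) * zeck_error (T - {j})"] by (simp add: numeral_eq_Suc)
    qed
  qed
qed

definition phase :: "nat \<Rightarrow> real" where
  "phase N = frac ((real N + 2) * tau)"

lemma phase_eq_frac: "phase N = frac (of_int (int N + 2) * tau)"
  by (simp add: phase_def)

lemma phase_bounds: "0 \<le> phase N" "phase N < 1"
  by (simp_all add: phase_def frac_lt_1)

lemma phase_zeck_val:
  assumes "zeck_set S" "S \<inter> {..<m} = L"
  obtains e where "-(tau ^ (m + 2)) < (-1) ^ m * e" "(-1) ^ m * e < tau ^ (m + 1)"
    "phase (zeck_val S) = frac (2 * tau - zeck_error L - e)"
proof
  let ?e = "zeck_error (S - {..<m})"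
  have "S - {..<m} \<subseteq> {m..}" by auto
  from zeck_error_bound[OF zeck_set_Diff[OF assms(1)] this]
  show "-(tau ^ (m + 2)) < (-1) ^ m * ?e" "(-1) ^ m * ?e < tau ^ (m + 1)" by auto
  have "zeck_error S = zeck_error L + ?e"
    using assms sum.Int_Diff[of S "\<lambda>i. (-tau) ^ (i + 2)" "{..<m}"]
    unfolding zeck_set_def zeck_error_def by simp
  then have "(real (zeck_val S) + 2) * tau
      = of_int (int (\<Sum>i\<in>S. fib (Suc i))) + (2 * tau - zeck_error L - ?e)"
    using zeck_val_mult_tau[of S] by (simp add: algebra_simps)
  then show "phase (zeck_val S) = frac (2 * tau - zeck_error L - ?e)"
    unfolding phase_def by (simp only: frac_add_of_int_left)
qed

lemmas tau_facts = tau_sq tau_pow_eqs tau_bounds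

(* The suffix lists the lowest Zeckendorf digits d_0 d_1 ... of the number. *)
lemma phase_digits_00:
  assumes "zeck_set S" "S \<inter> {..<2} = {}"
  shows "phase (zeck_val S) < tau\<^sup>2"
proof -
  obtain e where e: "-(tau ^ (2 + 2)) < (-1) ^ 2 * e" "(-1) ^ 2 * e < tau ^ (2 + 1)"
    and phase: "phase (zeck_val S) = frac (2 * tau - zeck_error {} - e)"
    by (rule phase_zeck_val[OF assms])
  have bounds: "-(tau ^ 4) < e" "e < tau ^ 3" using e by simp_all
  have err: "zeck_error {} = 0" by (simp add: zeck_error_def)
  have "phase (zeck_val S) = (2 * tau - zeck_error {} - e) - 1"
    unfolding phase by (rule frac_eq_diff) (use bounds err tau_facts in auto)
  then show ?thesis using bounds err tau_facts by linarith
qed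

lemma phase_digits_100:
  assumes "zeck_set S" "S \<inter> {..<3} = {0}"
  shows "2 * tau\<^sup>2 < phase (zeck_val S)"
proof -
  obtain e where e: "-(tau ^ (3 + 2)) < (-1) ^ 3 * e" "(-1) ^ 3 * e < tau ^ (3 + 1)"
    and phase: "phase (zeck_val S) = frac (2 * tau - zeck_error {0} - e)"
    by (rule phase_zeck_val[OF assms])
  have bounds: "-(tau ^ 4) < e" "e < tau ^ 5" using e by simp_all
  have err: "zeck_error {0} = tau\<^sup>2" by (simp add: zeck_error_def power2_eq_square)
  have "phase (zeck_val S) = (2 * tau - zeck_error {0} - e) - 0"
    unfolding phase by (rule frac_eq_diff) (use bounds err tau_facts in auto)
  then show ?thesis using bounds err tau_facts by linarith
qed

lemma phase_digits_0100:
  assumes "zeck_set S" "S \<inter> {..<4} = {1}"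
  shows "tau\<^sup>2 < phase (zeck_val S)" "phase (zeck_val S) < tau\<^sup>2 + tau ^ 4"
proof -
  obtain e where e: "-(tau ^ (4 + 2)) < (-1) ^ 4 * e" "(-1) ^ 4 * e < tau ^ (4 + 1)"
    and phase: "phase (zeck_val S) = frac (2 * tau - zeck_error {1} - e)"
    by (rule phase_zeck_val[OF assms])
  have bounds: "-(tau ^ 6) < e" "e < tau ^ 5" using e by simp_all
  have err: "zeck_error {1} = -(tau ^ 3)" by (simp add: zeck_error_def numeral_eq_Suc)
  have "phase (zeck_val S) = (2 * tau - zeck_error {1} - e) - 1"
    unfolding phase by (rule frac_eq_diff) (use bounds err tau_facts in auto)
  then show "tau\<^sup>2 < phase (zeck_val S)" "phase (zeck_val S) < tau\<^sup>2 + tau ^ 4"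
    using bounds err tau_facts by linarith+
qed

lemma phase_digits_1010:
  assumes "zeck_set S" "S \<inter> {..<4} = {0, 2}"
  shows "tau\<^sup>2 + tau ^ 4 < phase (zeck_val S)" "phase (zeck_val S) < 2 * tau\<^sup>2"
proof -
  obtain e where e: "-(tau ^ (4 + 2)) < (-1) ^ 4 * e" "(-1) ^ 4 * e < tau ^ (4 + 1)"
    and phase: "phase (zeck_val S) = frac (2 * tau - zeck_error {0, 2} - e)"
    by (rule phase_zeck_val[OF assms])
  have bounds: "-(tau ^ 6) < e" "e < tau ^ 5" using e by simp_all
  have err: "zeck_error {0, 2} = tau\<^sup>2 + tau ^ 4" by (simp add: zeck_error_def numeral_eq_Suc)
  have "phase (zeck_val S) = (2 * tau - zeck_error {0, 2} - e) - 0"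
    unfolding phase by (rule frac_eq_diff) (use bounds err tau_facts in auto)
  then show "tau\<^sup>2 + tau ^ 4 < phase (zeck_val S)" "phase (zeck_val S) < 2 * tau\<^sup>2"
    using bounds err tau_facts by linarith+
qed

lemma phase_digits_01010:
  assumes "zeck_set S" "S \<inter> {..<5} = {1, 3}"
  shows "tau\<^sup>2 + tau ^ 4 < phase (zeck_val S)" "phase (zeck_val S) < 2 * tau\<^sup>2"
proof -
  obtain e where e: "-(tau ^ (5 + 2)) < (-1) ^ 5 * e" "(-1) ^ 5 * e < tau ^ (5 + 1)"
    and phase: "phase (zeck_val S) = frac (2 * tau - zeck_error {1, 3} - e)"
    by (rule phase_zeck_val[OF assms])
  have bounds: "-(tau ^ 6) < e" "e < tau ^ 7" using e by simp_all
  have err: "zeck_error {1, 3} = -(tau ^ 3) - tau ^ 5" by (simp add: zeck_error_def numeral_eq_Suc)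
  have "phase (zeck_val S) = (2 * tau - zeck_error {1, 3} - e) - 1"
    unfolding phase by (rule frac_eq_diff) (use bounds err tau_facts in auto)
  then show "tau\<^sup>2 + tau ^ 4 < phase (zeck_val S)" "phase (zeck_val S) < 2 * tau\<^sup>2"
    using bounds err tau_facts by linarith+
qed

lemma phase_classification:
  "N \<in> incr_pts \<and> phase N < tau\<^sup>2
   \<or> N \<in> const_pts \<and> (tau\<^sup>2 \<le> phase N \<and> phase N < tau\<^sup>2 + tau ^ 4 \<or> 2 * tau\<^sup>2 < phase N)
   \<or> N \<in> decr_pts \<and> tau\<^sup>2 + tau ^ 4 < phase N \<and> phase N < 2 * tau\<^sup>2"
proof -
  obtain S where S: "zeck_set S" "zeck_val S = N" using zeck_val_surj by blast
  have no_succ: "i \<in> S \<Longrightarrow> Suc i \<notin> S" for i using S(1) by (simp add: zeck_set_def)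
  then have no_adj: "0 \<in> S \<Longrightarrow> 1 \<notin> S" "1 \<in> S \<Longrightarrow> 2 \<notin> S" "2 \<in> S \<Longrightarrow> 3 \<notin> S" "3 \<in> S \<Longrightarrow> 4 \<notin> S"
    by (metis One_nat_def Suc_1 numeral_3_eq_3 numeral_Bit0 add_2_eq_Suc)+
  have below: "{..<2} = {0, 1::nat}" "{..<3} = {0, 1, 2::nat}" "{..<4} = {0, 1, 2, 3::nat}"
    "{..<5} = {0, 1, 2, 3, 4::nat}" by auto
  consider "0 \<notin> S" "1 \<notin> S" | "0 \<in> S" "2 \<notin> S" | "0 \<in> S" "2 \<in> S"
    | "1 \<in> S" "3 \<notin> S" | "1 \<in> S" "3 \<in> S"
    by blast
  then show ?thesis
  proof cases
    case 1
    then have "S \<inter> {..<2} = {}" unfolding below by blast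
    then show ?thesis using incr_ptsI[OF S(1) 1] phase_digits_00[OF S(1)] S(2) by blast
  next
    case 2
    then have "S \<inter> {..<3} = {0}" using no_adj unfolding below by auto
    then have "2 * tau\<^sup>2 < phase N" using phase_digits_100[OF S(1)] S(2) by blast
    moreover have "N \<in> const_pts" using const_ptsI[OF S(1), of 0] 2 S(2) by (simp add: numeral_2_eq_2)
    ultimately show ?thesis by blast
  next
    case 3
    then have "S \<inter> {..<4} = {0, 2}" using no_adj unfolding below by auto
    then have "tau\<^sup>2 + tau ^ 4 < phase N" "phase N < 2 * tau\<^sup>2" using phase_digits_1010[OF S(1)] S(2) by blast+
    moreover have "N \<in> decr_pts" using decr_ptsI[OF S(1), of 0] 3 S(2) by (simp add: numeral_2_eq_2)
    ultimately show ?thesis by blast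
  next
    case 4
    then have "S \<inter> {..<4} = {1}" using no_adj unfolding below by auto
    then have "tau\<^sup>2 < phase N" "phase N < tau\<^sup>2 + tau ^ 4" using phase_digits_0100[OF S(1)] S(2) by blast+
    moreover have "N \<in> const_pts" using const_ptsI[OF S(1), of 1] 4 S(2) by (simp add: numeral_3_eq_3)
    ultimately show ?thesis by auto
  next
    case 5
    then have "S \<inter> {..<5} = {1, 3}" using no_adj unfolding below by auto
    then have "tau\<^sup>2 + tau ^ 4 < phase N" "phase N < 2 * tau\<^sup>2" using phase_digits_01010[OF S(1)] S(2) by blast+
    moreover have "N \<in> decr_pts" using decr_ptsI[OF S(1), of 1] 5 S(2) by (simp add: numeral_3_eq_3)
    ultimately show ?thesis by blast
  qed
qed

lemma pts_phase_windows:
  "incr_pts = {N. phase N < tau\<^sup>2}"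
  "const_pts = {N. tau\<^sup>2 \<le> phase N \<and> phase N < tau\<^sup>2 + tau ^ 4 \<or> 2 * tau\<^sup>2 < phase N}"
  "decr_pts = {N. tau\<^sup>2 + tau ^ 4 < phase N \<and> phase N < 2 * tau\<^sup>2}"
proof -
  have pos: "0 < tau\<^sup>2" "0 < tau ^ 4" using tau_pos by simp_all
  have disj: "N \<notin> incr_pts \<or> N \<notin> const_pts" "N \<notin> incr_pts \<or> N \<notin> decr_pts"
    "N \<notin> const_pts \<or> N \<notin> decr_pts" for N
    unfolding incr_pts_def const_pts_def decr_pts_def by auto
  show "incr_pts = {N. phase N < tau\<^sup>2}"
    "const_pts = {N. tau\<^sup>2 \<le> phase N \<and> phase N < tau\<^sup>2 + tau ^ 4 \<or> 2 * tau\<^sup>2 < phase N}"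
    "decr_pts = {N. tau\<^sup>2 + tau ^ 4 < phase N \<and> phase N < 2 * tau\<^sup>2}"
    by (intro set_eqI; simp; use phase_classification pos disj in smt)+
qed

section \<open>Beatty-type sets\<close>

lemma frac_less_iff:
  fixes x c :: real
  assumes "0 < c" "c \<le> 1"
  shows "frac x < c \<longleftrightarrow> (\<exists>p::int. \<exists>f. 0 \<le> f \<and> f < 1 \<and> x = of_int p + c * f)"
proof
  assume "frac x < c"
  then have "0 \<le> frac x / c" "frac x / c < 1" "x = of_int \<lfloor>x\<rfloor> + c * (frac x / c)"
    using assms by (simp_all add: frac_def)
  then show "\<exists>p::int. \<exists>f. 0 \<le> f \<and> f < 1 \<and> x = of_int p + c * f" by blast
next
  assume "\<exists>p::int. \<exists>f. 0 \<le> f \<and> f < 1 \<and> x = of_int p + c * f"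
  then obtain p :: int and f where f: "0 \<le> f" "f < 1" and x: "x = of_int p + c * f" by blast
  have "0 \<le> c * f" "c * f < c" using f assms by simp_all
  then have "frac x = c * f" unfolding x using assms(2) by (simp add: frac_eq)
  then show "frac x < c" using \<open>c * f < c\<close> by simp
qed

lemma frac_greater_iff:
  fixes x c :: real
  assumes "0 < c" "c \<le> 1"
  shows "x \<in> \<int> \<or> 1 - c < frac x \<longleftrightarrow> (\<exists>p::int. \<exists>f. 0 \<le> f \<and> f < 1 \<and> x = of_int p - c * f)"
proof -
  have "x \<in> \<int> \<or> 1 - c < frac x \<longleftrightarrow> frac (- x) < c"
    using assms by (auto simp: frac_neg)
  also have "\<dots> \<longleftrightarrow> (\<exists>p::int. \<exists>f. 0 \<le> f \<and> f < 1 \<and> - x = of_int p + c * f)"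
    by (rule frac_less_iff[OF assms])
  also have "\<dots> \<longleftrightarrow> (\<exists>p::int. \<exists>f. 0 \<le> f \<and> f < 1 \<and> x = of_int p - c * f)"
    by (metis add.inverse_inverse minus_diff_eq of_int_minus uminus_add_conv_diff)
  finally show ?thesis .
qed

lemma fib_comb_mult_tau:
  "(real (fib (k + 2)) * x + real (fib (k + 1)) * y) * tau
    = real (fib (k + 1)) * x + real (fib k) * y + (-tau) ^ (k + 1) * (x * tau - y)"
proof -
  define a b c t where a_def: "a = real (fib (k + 2))" and b_def: "b = real (fib (k + 1))"
    and c_def: "c = real (fib k)" and t_def: "t = (-tau) ^ (k + 1)"
  have eqs: "a * tau = b + tau * t" "b * tau = c - t"
    unfolding a_def b_def c_def t_def using fib_mult_tau[of "k + 1"] fib_mult_tau[of k]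
    by (simp_all del: fib.simps)
  have "(a * x + b * y) * tau = x * (a * tau) + y * (b * tau)" by (simp add: algebra_simps)
  also have "\<dots> = x * (b + tau * t) + y * (c - t)" by (simp only: eqs)
  finally have "(a * x + b * y) * tau = x * (b + tau * t) + y * (c - t)" .
  then show ?thesis unfolding a_def b_def c_def t_def by (simp add: algebra_simps)
qed

lemma fib_matrix_surj:
  fixes M p :: int
  obtains n q where "M = int (fib (k + 2)) * n + int (fib (k + 1)) * q"
    "p = int (fib (k + 1)) * n + int (fib k) * q"
proof -
  define a b d c :: int where a_def: "a = int (fib (k + 2))" and b_def: "b = int (fib (k + 1))"
    and d_def: "d = int (fib k)" and c_def: "c = - ((-1) ^ k)"
  have cassini: "a * d - b\<^sup>2 = c"
    using fib_Cassini_int[of k] unfolding a_def b_def d_def c_def by (simp del: fib.simps)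
  have c_sq: "c * c = 1" by (simp add: c_def flip: power_add mult_2)
  have "a * (c * (d * M - b * p)) + b * (c * (a * p - b * M)) = c * (a * d - b\<^sup>2) * M"
    "b * (c * (d * M - b * p)) + d * (c * (a * p - b * M)) = c * (a * d - b\<^sup>2) * p"
    by (simp_all add: algebra_simps power2_eq_square)
  then have "a * (c * (d * M - b * p)) + b * (c * (a * p - b * M)) = M"
    "b * (c * (d * M - b * p)) + d * (c * (a * p - b * M)) = p"
    by (simp_all only: cassini c_sq mult_1_left)
  then show ?thesis
    using that[of "c * (d * M - b * p)" "c * (a * p - b * M)"] unfolding a_def b_def d_def by metis
qed

lemma fib_beatty_mult_tau:
  "of_int (int (fib (k + 1)) * \<lfloor>real n * phi\<rfloor> + int (fib k) * int n) * tau
    = of_int (int (fib (k + 1)) * int n + int (fib k) * \<lfloor>real n * tau\<rfloor>) + (-tau) ^ (k + 1) * frac (real n * tau)"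
proof -
  have "int (fib (k + 1)) * \<lfloor>real n * phi\<rfloor> + int (fib k) * int n
      = int (fib (k + 2)) * int n + int (fib (k + 1)) * \<lfloor>real n * tau\<rfloor>"
    unfolding floor_mult_phi by (simp add: fib_plus_2 algebra_simps)
  then show ?thesis
    using fib_comb_mult_tau[of k "real n" "of_int \<lfloor>real n * tau\<rfloor>"] by (simp add: frac_def)
qed

lemma fib_beatty_iff:
  fixes M :: int
  assumes "0 < M"
  shows "(\<exists>n::nat. 1 \<le> n \<and> M = int (fib (k + 1)) * \<lfloor>real n * phi\<rfloor> + int (fib k) * int n)
    \<longleftrightarrow> (\<exists>p::int. \<exists>f. 0 \<le> f \<and> f < 1 \<and> of_int M * tau = of_int p + (-tau) ^ (k + 1) * f)"
proof
  assume "\<exists>n::nat. 1 \<le> n \<and> M = int (fib (k + 1)) * \<lfloor>real n * phi\<rfloor> + int (fib k) * int n"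
  then show "\<exists>p::int. \<exists>f. 0 \<le> f \<and> f < 1 \<and> of_int M * tau = of_int p + (-tau) ^ (k + 1) * f"
    using fib_beatty_mult_tau frac_lt_1 frac_ge_0 by blast
next
  assume "\<exists>p::int. \<exists>f. 0 \<le> f \<and> f < 1 \<and> of_int M * tau = of_int p + (-tau) ^ (k + 1) * f"
  then obtain p :: int and f where f: "0 \<le> f" "f < 1" and Mp: "of_int M * tau = of_int p + (-tau) ^ (k + 1) * f"
    by blast
  obtain n q where nq: "M = int (fib (k + 2)) * n + int (fib (k + 1)) * q"
    "p = int (fib (k + 1)) * n + int (fib k) * q"
    by (rule fib_matrix_surj)
  have "of_int M * tau = of_int p + (-tau) ^ (k + 1) * (of_int n * tau - of_int q)"
    using fib_comb_mult_tau[of k "of_int n" "of_int q"] nq by simp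
  then have "of_int n * tau - of_int q = f"
    using Mp tau_pos by simp
  then have floor_eq: "\<lfloor>of_int n * tau\<rfloor> = q" using f by linarith
  have "0 < n"
  proof (rule ccontr)
    assume "\<not> 0 < n"
    then have "of_int n * tau \<le> 0" using tau_pos by (simp add: mult_nonpos_nonneg)
    then have "q \<le> 0" using floor_eq by linarith
    moreover have "n \<le> 0" using \<open>\<not> 0 < n\<close> by simp
    ultimately have "int (fib (k + 2)) * n \<le> 0" "int (fib (k + 1)) * q \<le> 0"
      by (simp_all add: mult_nonneg_nonpos)
    then show False using nq(1) \<open>0 < M\<close> by linarith
  qed
  have "M = int (fib (k + 1)) * \<lfloor>real (nat n) * phi\<rfloor> + int (fib k) * int (nat n)"
    using nq(1) floor_eq \<open>0 < n\<close> unfolding floor_mult_phi by (simp add: fib_plus_2 algebra_simps)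
  then show "\<exists>n::nat. 1 \<le> n \<and> M = int (fib (k + 1)) * \<lfloor>real n * phi\<rfloor> + int (fib k) * int n"
    using \<open>0 < n\<close> by (intro exI[of _ "nat n"]) simp
qed

lemma fib_beatty_odd:
  fixes M :: int
  assumes "odd k" "0 < M"
  shows "frac (of_int M * tau) < tau ^ (k + 1)
    \<longleftrightarrow> (\<exists>n::nat. 1 \<le> n \<and> M = int (fib (k + 1)) * \<lfloor>real n * phi\<rfloor> + int (fib k) * int n)"
proof -
  have sign: "(-tau) ^ (k + 1) = tau ^ (k + 1)" using assms(1) by simp
  have "frac (of_int M * tau) < tau ^ (k + 1)
      \<longleftrightarrow> (\<exists>p::int. \<exists>f. 0 \<le> f \<and> f < 1 \<and> of_int M * tau = of_int p + tau ^ (k + 1) * f)"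
    using tau_pow_Suc_bounds[of k] by (intro frac_less_iff) simp_all
  also have "\<dots> \<longleftrightarrow> (\<exists>n::nat. 1 \<le> n \<and> M = int (fib (k + 1)) * \<lfloor>real n * phi\<rfloor> + int (fib k) * int n)"
    unfolding fib_beatty_iff[OF assms(2)] sign ..
  finally show ?thesis .
qed

lemma fib_beatty_even:
  fixes M :: int
  assumes "even k" "0 < M"
  shows "1 - tau ^ (k + 1) < frac (of_int M * tau)
    \<longleftrightarrow> (\<exists>n::nat. 1 \<le> n \<and> M = int (fib (k + 1)) * \<lfloor>real n * phi\<rfloor> + int (fib k) * int n)"
proof -
  have sign: "(-tau) ^ (k + 1) * f = - (tau ^ (k + 1) * f)" for f using assms(1) by simp
  have "1 - tau ^ (k + 1) < frac (of_int M * tau) \<longleftrightarrow> of_int M * tau \<in> \<int> \<or> 1 - tau ^ (k + 1) < frac (of_int M * tau)"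
    using mult_tau_notin_Ints[OF assms(2)] by simp
  also have "\<dots> \<longleftrightarrow> (\<exists>p::int. \<exists>f. 0 \<le> f \<and> f < 1 \<and> of_int M * tau = of_int p - tau ^ (k + 1) * f)"
    using tau_pow_Suc_bounds[of k] by (intro frac_greater_iff) simp_all
  also have "\<dots> \<longleftrightarrow> (\<exists>n::nat. 1 \<le> n \<and> M = int (fib (k + 1)) * \<lfloor>real n * phi\<rfloor> + int (fib k) * int n)"
    unfolding fib_beatty_iff[OF assms(2)] sign diff_conv_add_uminus ..
  finally show ?thesis .
qed

lemma fib_3: "fib 3 = 2" and fib_4: "fib 4 = 3"
  by (simp_all add: numeral_eq_Suc)

lemma phase_less_iff:
  "phase N < tau\<^sup>2 \<longleftrightarrow> (\<exists>n::nat. 1 \<le> n \<and> int N = \<lfloor>real n * phi\<rfloor> + int n - 2)"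
proof -
  have "phase N < tau\<^sup>2 \<longleftrightarrow> (\<exists>n::nat. 1 \<le> n \<and> int N + 2 = \<lfloor>real n * phi\<rfloor> + int n)"
    using fib_beatty_odd[of 1 "int N + 2"] by (simp add: phase_eq_frac power2_eq_square)
  then show ?thesis by (simp add: algebra_simps)
qed

lemma phase_greater_iff:
  "2 * tau\<^sup>2 < phase N \<longleftrightarrow> (\<exists>n::nat. 1 \<le> n \<and> int N = 2 * \<lfloor>real n * phi\<rfloor> + int n - 2)"
proof -
  have "1 - tau ^ 3 = 2 * tau\<^sup>2" using tau_sq tau_pow_eqs by simp
  then have "2 * tau\<^sup>2 < phase N \<longleftrightarrow> (\<exists>n::nat. 1 \<le> n \<and> int N + 2 = 2 * \<lfloor>real n * phi\<rfloor> + int n)"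
    using fib_beatty_even[of 2 "int N + 2"] by (simp add: phase_eq_frac fib_3)
  then show ?thesis by (simp add: algebra_simps)
qed

lemma phase_middle_iff:
  "tau\<^sup>2 \<le> phase N \<and> phase N < tau\<^sup>2 + tau ^ 4
    \<longleftrightarrow> (\<exists>n::nat. 1 \<le> n \<and> int N = 3 * \<lfloor>real n * phi\<rfloor> + 2 * int n - 3)"
proof -
  have "frac (of_int (int N + 3) * tau) = frac ((real N + 2) * tau + tau)"
    by (simp add: algebra_simps)
  also have "\<dots> = (if phase N + tau < 1 then phase N + tau else phase N + tau - 1)"
    using tau_bounds by (simp add: frac_add phase_def frac_eq)
  finally have "tau\<^sup>2 \<le> phase N \<and> phase N < tau\<^sup>2 + tau ^ 4 \<longleftrightarrow> frac (of_int (int N + 3) * tau) < tau ^ 4"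
    using tau_sq tau_pow_eqs tau_bounds phase_bounds[of N] by auto
  also have "\<dots> \<longleftrightarrow> (\<exists>n::nat. 1 \<le> n \<and> int N + 3 = 3 * \<lfloor>real n * phi\<rfloor> + 2 * int n)"
    using fib_beatty_odd[of 3 "int N + 3"] by (simp add: fib_3 fib_4)
  finally show ?thesis by (simp add: algebra_simps)
qed

lemma phase_decr_iff:
  "tau\<^sup>2 + tau ^ 4 < phase N \<and> phase N < 2 * tau\<^sup>2
    \<longleftrightarrow> (\<exists>n::nat. 1 \<le> n \<and> int N = 2 * \<lfloor>real n * phi\<rfloor> + int n - 4)"
proof -
  have "frac (2 * tau) = 2 * tau - 1"
    using tau_bounds by (intro frac_eq_diff) auto
  have "frac (of_int (int N + 4) * tau) = frac ((real N + 2) * tau + 2 * tau)"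
    by (simp add: algebra_simps)
  also have "\<dots> = (if phase N + (2 * tau - 1) < 1 then phase N + (2 * tau - 1) else phase N + (2 * tau - 1) - 1)"
    using \<open>frac (2 * tau) = 2 * tau - 1\<close> by (simp add: frac_add phase_def)
  finally have "tau\<^sup>2 + tau ^ 4 < phase N \<and> phase N < 2 * tau\<^sup>2 \<longleftrightarrow> 1 - tau ^ 3 < frac (of_int (int N + 4) * tau)"
    using tau_sq tau_pow_eqs tau_bounds phase_bounds[of N] by auto
  also have "\<dots> \<longleftrightarrow> (\<exists>n::nat. 1 \<le> n \<and> int N + 4 = 2 * \<lfloor>real n * phi\<rfloor> + int n)"
    using fib_beatty_even[of 2 "int N + 4"] by (simp add: fib_3)
  finally show ?thesis by (simp add: algebra_simps)
qed

section \<open>Enumerations\<close>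

lemma enumerate_range_strict_mono:
  fixes h :: "nat \<Rightarrow> nat"
  assumes "strict_mono h"
  shows "enumerate (range h) n = h n"
proof (induction n)
  case 0
  show ?case unfolding enumerate_0
    by (rule Least_equality) (auto simp: strict_mono_less_eq[OF assms])
next
  case (Suc n)
  have "infinite (range h)" using assms strict_mono_imp_inj_on range_inj_infinite by blast
  show ?case unfolding enumerate_Suc''[OF \<open>infinite (range h)\<close>] Suc.IH
    by (rule Least_equality) (auto simp: strict_mono_less[OF assms] strict_mono_less_eq[OF assms])
qed

lemma enumerate_int_strict_mono:
  fixes g :: "nat \<Rightarrow> int"
  assumes "strict_mono g" "0 \<le> g a" "S = {N. \<exists>n\<ge>a. int N = g n}"
  shows "int (enumerate S k) = g (k + a)"
proof -
  define h where "h k = nat (g (k + a))" for k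
  have g_nonneg: "0 \<le> g (k + a)" for k
    using assms(2) strict_mono_less_eq[OF assms(1), of a "k + a"] by simp
  then have int_h: "int (h k) = g (k + a)" for k by (simp add: h_def)
  have "strict_mono h"
    unfolding strict_mono_def by (metis int_h assms(1) add_less_mono1 of_nat_less_iff strict_monoD)
  moreover have "S = range h"
  proof (intro set_eqI iffI)
    fix N assume "N \<in> S"
    then obtain n where "a \<le> n" "int N = g n" using assms(3) by blast
    then have "N = h (n - a)" using int_h[of "n - a"] by simp
    then show "N \<in> range h" by blast
  next
    fix N assume "N \<in> range h"
    then obtain k where "int N = g (k + a)" using int_h by auto
    then show "N \<in> S" using assms(3) le_add2 by blast
  qed
  ultimately show ?thesis using enumerate_range_strict_mono int_h by simp
qed

lemma strict_mono_floor_mult_phi: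
  fixes a b :: int
  assumes "0 < a" "0 < b"
  shows "strict_mono (\<lambda>n. a * \<lfloor>real n * phi\<rfloor> + b * int n - c)"
  unfolding strict_mono_Suc_iff
proof
  fix n
  have "a * \<lfloor>real n * tau\<rfloor> \<le> a * \<lfloor>real (Suc n) * tau\<rfloor>"
    using assms tau_pos by (intro mult_left_mono floor_mono) simp_all
  moreover have "(a * \<lfloor>real (Suc n) * phi\<rfloor> + b * int (Suc n) - c) - (a * \<lfloor>real n * phi\<rfloor> + b * int n - c)
      = a + b + (a * \<lfloor>real (Suc n) * tau\<rfloor> - a * \<lfloor>real n * tau\<rfloor>)"
    unfolding floor_mult_phi by (simp add: algebra_simps)
  ultimately show "a * \<lfloor>real n * phi\<rfloor> + b * int n - c < a * \<lfloor>real (Suc n) * phi\<rfloor> + b * int (Suc n) - c"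
    using assms by linarith
qed

lemma I_Z_eq: "1 \<le> n \<Longrightarrow> int (I_Z n) = \<lfloor>real n * phi\<rfloor> + int n - 2"
  unfolding I_Z_def
  using enumerate_int_strict_mono[OF strict_mono_floor_mult_phi[of 1 1 2], of 1 incr_pts "n - 1"]
    floor_mult_phi_ge[of 1]
  by (simp add: pts_phase_windows phase_less_iff)

lemma D_Z_eq: "1 \<le> n \<Longrightarrow> D_Z n = 2 * \<lfloor>real n * phi\<rfloor> + int n - 4"
proof -
  assume "1 \<le> n"
  have "\<lfloor>tau\<rfloor> = 0" using tau_bounds by (simp add: floor_eq_iff)
  then have floor_phi: "\<lfloor>phi\<rfloor> = 1" using floor_mult_phi[of 1] by simp
  have "decr_pts = {N. \<exists>n\<ge>2. int N = 2 * \<lfloor>real n * phi\<rfloor> + int n - 4}"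
  proof (intro set_eqI iffI)
    fix N assume "N \<in> decr_pts"
    then obtain m where "1 \<le> m" "int N = 2 * \<lfloor>real m * phi\<rfloor> + int m - 4"
      unfolding pts_phase_windows phase_decr_iff by blast
    moreover from calculation have "m \<noteq> 1" using floor_phi by auto
    ultimately show "N \<in> {N. \<exists>n\<ge>2. int N = 2 * \<lfloor>real n * phi\<rfloor> + int n - 4}"
      by (intro CollectI exI[of _ m]) simp
  next
    fix N assume "N \<in> {N. \<exists>n\<ge>2. int N = 2 * \<lfloor>real n * phi\<rfloor> + int n - 4}"
    then obtain m where "2 \<le> m" "int N = 2 * \<lfloor>real m * phi\<rfloor> + int m - 4" by blast
    then show "N \<in> decr_pts" unfolding pts_phase_windows phase_decr_iff by (intro CollectI exI[of _ m]) simp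
  qed
  moreover have "0 \<le> 2 * \<lfloor>real 2 * phi\<rfloor> + int 2 - 4" using floor_mult_phi_ge[of 2] by simp
  ultimately have "n \<noteq> 1 \<Longrightarrow> int (enumerate decr_pts (n - 2)) = 2 * \<lfloor>real n * phi\<rfloor> + int n - 4"
    using enumerate_int_strict_mono[OF strict_mono_floor_mult_phi[of 2 1 4], of 2 decr_pts "n - 2"] \<open>1 \<le> n\<close>
    by simp
  then show ?thesis using floor_phi by (simp add: D_Z_def)
qed

lemma int_const_pts_eq:
  "int ` const_pts = {2 * \<lfloor>real n * phi\<rfloor> + int n - 2 | n::nat. n \<ge> 1}
    \<union> {3 * \<lfloor>real n * phi\<rfloor> + 2 * int n - 3 | n::nat. n \<ge> 1}"
proof (intro set_eqI iffI)
  fix z assume "z \<in> int ` const_pts"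
  then show "z \<in> {2 * \<lfloor>real n * phi\<rfloor> + int n - 2 | n::nat. n \<ge> 1}
      \<union> {3 * \<lfloor>real n * phi\<rfloor> + 2 * int n - 3 | n::nat. n \<ge> 1}"
    unfolding pts_phase_windows phase_greater_iff phase_middle_iff by auto
next
  fix z assume "z \<in> {2 * \<lfloor>real n * phi\<rfloor> + int n - 2 | n::nat. n \<ge> 1}
      \<union> {3 * \<lfloor>real n * phi\<rfloor> + 2 * int n - 3 | n::nat. n \<ge> 1}"
  then obtain n :: nat where "1 \<le> n"
    "z = 2 * \<lfloor>real n * phi\<rfloor> + int n - 2 \<or> z = 3 * \<lfloor>real n * phi\<rfloor> + 2 * int n - 3"
    by blast
  moreover have "int n \<le> \<lfloor>real n * phi\<rfloor>" by (rule floor_mult_phi_ge)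
  ultimately have "z = int (nat z)" "nat z \<in> const_pts"
    unfolding pts_phase_windows phase_greater_iff phase_middle_iff by auto
  then show "z \<in> int ` const_pts" by (metis imageI)
qed

theorem theorem2:
  shows "(\<forall>n::nat. n \<ge> 1 \<longrightarrow> int (I_Z n) = \<lfloor>real n * phi\<rfloor> + int n - 2)
    \<and> int ` const_pts =
        {2 * \<lfloor>real n * phi\<rfloor> + int n - 2 | n::nat. n \<ge> 1}
        \<union> {3 * \<lfloor>real n * phi\<rfloor> + 2 * int n - 3 | n::nat. n \<ge> 1}
    \<and> (\<forall>n::nat. n \<ge> 1 \<longrightarrow> D_Z n = 2 * \<lfloor>real n * phi\<rfloor> + int n - 4)"
  using I_Z_eq int_const_pts_eq D_Z_eq by blast

end
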